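(* Let $\varphi\colon G\twoheadrightarrow Q$ be an epimorphism from a finitely generated group $G$ to a group $Q$, and let $\varphi^*\colon H^1(Q,\mathbb{Q})\hookrightarrow H^1(G,\mathbb{Q})$ be the induced monomorphism. Then for each $r\ge1$ the induced map $\varphi^*_r\colon\operatorname{Grass}_r(H^1(Q,\mathbb{Q}))\hookrightarrow\operatorname{Grass}_r(H^1(G,\mathbb{Q}))$ maps $\operatorname{Grass}_r(H^1(Q,\mathbb{Q}))\setminus\Omega^1_r(Q)$ into $\operatorname{Grass}_r(H^1(G,\mathbb{Q}))\setminus\Omega^1_r(G)$.
   Context: For a finitely generated group $H$ and an epimorphism $\nu\colon H\twoheadrightarrow\mathbb{Z}^r$, let $P_\nu=\operatorname{im}(\nu^*\colon\mathbb{Q}^r\to H^1(H,\mathbb{Q}))$; every rational $r$-plane in $H^1(H,\mathbb{Q})$ is of this form. The Dwyer–Fried sets of $H$ are $\Omega^i_r(H)=\{P_\nu\in\operatorname{Grass}_r(H^1(H,\mathbb{Q}))\mid b_j(\ker\nu)<\infty\ \text{for all } j\le i\}$, where $b_j$ denotes the $j$-th rational Betti number of the group (equivalently of the $\mathbb{Z}^r$-cover of $K(H,1)$ determined by $\nu$); by convention this is empty if $r>b_1(H)$. *)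

theory Defs
  imports "HOL-Algebra.Algebra"
begin

definition add_grp :: "('b::comm_monoid_add) monoid" where
  "add_grp = \<lparr>carrier = UNIV, monoid.mult = (+), one = 0\<rparr>"

definition fin_gen_group :: "('a, 'c) monoid_scheme \<Rightarrow> bool" where
  "fin_gen_group G \<longleftrightarrow> group G \<and> (\<exists>S. finite S \<and> S \<subseteq> carrier G \<and> generate G S = carrier G)"

text \<open>H^1(G,Q) = Hom(G,(Q,+)), homomorphisms represented as extensional functions on carrier G.\<close>
definition H1 :: "('a, 'c) monoid_scheme \<Rightarrow> ('a \<Rightarrow> rat) set" where
  "H1 G = hom G (add_grp :: rat monoid) \<inter> extensional (carrier G)"

definition qspan :: "('a, 'c) monoid_scheme \<Rightarrow> nat \<Rightarrow> (nat \<Rightarrow> 'a \<Rightarrow> rat) \<Rightarrow> ('a \<Rightarrow> rat) set" where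
  "qspan G r f = {restrict (\<lambda>x. \<Sum>i<r. c i * f i x) (carrier G) | c. True}"

definition qlin_indep :: "('a, 'c) monoid_scheme \<Rightarrow> nat \<Rightarrow> (nat \<Rightarrow> 'a \<Rightarrow> rat) \<Rightarrow> bool" where
  "qlin_indep G r f \<longleftrightarrow>
     (\<forall>c. (\<forall>x\<in>carrier G. (\<Sum>i<r. c i * f i x) = 0) \<longrightarrow> (\<forall>i<r. c i = 0))"

definition Grass :: "nat \<Rightarrow> ('a, 'c) monoid_scheme \<Rightarrow> ('a \<Rightarrow> rat) set set" where
  "Grass r G = {P. \<exists>f. (\<forall>i<r. f i \<in> H1 G) \<and> qlin_indep G r f \<and> P = qspan G r f}"

text \<open>An epimorphism nu : G -> Z^r, given by its r coordinate homomorphisms nu 0, ..., nu (r-1).\<close>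
definition epi_Zr :: "('a, 'c) monoid_scheme \<Rightarrow> nat \<Rightarrow> (nat \<Rightarrow> 'a \<Rightarrow> int) \<Rightarrow> bool" where
  "epi_Zr G r \<nu> \<longleftrightarrow> (\<forall>i<r. \<nu> i \<in> hom G (add_grp :: int monoid)) \<and>
     (\<forall>z::nat \<Rightarrow> int. \<exists>g\<in>carrier G. \<forall>i<r. \<nu> i g = z i)"

definition ker_Zr :: "('a, 'c) monoid_scheme \<Rightarrow> nat \<Rightarrow> (nat \<Rightarrow> 'a \<Rightarrow> int) \<Rightarrow> 'a set" where
  "ker_Zr G r \<nu> = {g \<in> carrier G. \<forall>i<r. \<nu> i g = 0}"

text \<open>P_nu = image of nu^* : Q^r -> H^1(G,Q), i.e. the rational span of the coordinates of nu.\<close>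
definition P_nu :: "('a, 'c) monoid_scheme \<Rightarrow> nat \<Rightarrow> (nat \<Rightarrow> 'a \<Rightarrow> int) \<Rightarrow> ('a \<Rightarrow> rat) set" where
  "P_nu G r \<nu> = qspan G r (\<lambda>i x. of_int (\<nu> i x))"

text \<open>b_1(K) < infinity for a subgroup K of G: H_1(K;Q) = K_ab \<otimes> Q is finite-dimensional,
  i.e. finitely many elements of K span K_ab \<otimes> Q: every k in K has a positive power
  in the subgroup generated by S and the commutator subgroup [K,K].\<close>
definition b1_finite :: "('a, 'c) monoid_scheme \<Rightarrow> 'a set \<Rightarrow> bool" where
  "b1_finite G K \<longleftrightarrow> (\<exists>S. finite S \<and> S \<subseteq> K \<and>
     (\<forall>k\<in>K. \<exists>m::nat. m > 0 \<and> k [^]\<^bsub>G\<^esub> m \<in> generate G (S \<union> derived G K)))"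

text \<open>Omega^1_r(G). (b_0 of a group is always 1, hence only b_1 needs to be finite.)\<close>
definition Omega1 :: "nat \<Rightarrow> ('a, 'c) monoid_scheme \<Rightarrow> ('a \<Rightarrow> rat) set set" where
  "Omega1 r G = {P \<in> Grass r G. \<exists>\<nu>. epi_Zr G r \<nu> \<and> P = P_nu G r \<nu> \<and> b1_finite G (ker_Zr G r \<nu>)}"

definition pullback :: "('a, 'c) monoid_scheme \<Rightarrow> ('a \<Rightarrow> 'b) \<Rightarrow> ('b \<Rightarrow> rat) \<Rightarrow> ('a \<Rightarrow> rat)" where
  "pullback G \<phi> f = restrict (f \<circ> \<phi>) (carrier G)"

definition pullback_Grass :: "('a, 'c) monoid_scheme \<Rightarrow> ('a \<Rightarrow> 'b) \<Rightarrow> ('b \<Rightarrow> rat) set \<Rightarrow> ('a \<Rightarrow> rat) set" where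
  "pullback_Grass G \<phi> P = pullback G \<phi> ` P"

end

theory Submission
  imports Defs
begin

text \<open>Pulling back along the epimorphism \<open>\<phi>\<close> is injective and maps rational spans to rational
  spans, so it embeds the Grassmannians. If the pulled-back plane were \<open>P\<^sub>\<nu>\<close> with
  \<open>b\<^sub>1(ker \<nu>) < \<infinity>\<close>, then every coordinate of \<open>\<nu>\<close> is a pulled-back rational function and hence
  constant on the fibres of \<open>\<phi>\<close>; so \<open>\<nu>\<close> descends to an epimorphism \<open>\<nu>'\<close> on \<open>Q\<close> with
  \<open>P = P\<^sub>\<nu>\<^sub>'\<close> and \<open>ker \<nu>' = \<phi>(ker \<nu>)\<close>. Finiteness of \<open>b\<^sub>1\<close> passes to homomorphic images, so
  \<open>P \<in> \<Omega>\<^sup>1\<^sub>r(Q)\<close>.\<close>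

lemma qspan_cong:
  assumes "\<And>i x. i < r \<Longrightarrow> x \<in> carrier G \<Longrightarrow> f i x = g i x"
  shows "qspan G r f = qspan G r g"
proof -
  have "restrict (\<lambda>x. \<Sum>i<r. c i * f i x) (carrier G) = restrict (\<lambda>x. \<Sum>i<r. c i * g i x) (carrier G)"
    for c
    using assms by (intro restrict_ext sum.cong) auto
  thus ?thesis unfolding qspan_def by auto
qed

lemma qspan_subset_extensional: "qspan G r f \<subseteq> extensional (carrier G)"
  unfolding qspan_def by auto

lemma coordinate_in_qspan:
  assumes "i < r"
  shows "restrict (f i) (carrier G) \<in> qspan G r f"
proof -
  have "(\<Sum>j<r. (if j = i then 1 else 0) * f j x) = f i x" for x
    using assms by (simp add: if_distrib[of "\<lambda>a. a * _"] cong: if_cong)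
  thus ?thesis unfolding qspan_def by (intro CollectI exI[of _ "\<lambda>j. if j = i then 1 else 0"]) auto
qed

lemma pullback_Grass_qspan:
  assumes "\<phi> \<in> carrier G \<rightarrow> carrier Q"
  shows "pullback_Grass G \<phi> (qspan Q r f) = qspan G r (\<lambda>i. pullback G \<phi> (f i))"
proof -
  have "pullback G \<phi> (restrict (\<lambda>y. \<Sum>i<r. c i * f i y) (carrier Q))
      = restrict (\<lambda>x. \<Sum>i<r. c i * pullback G \<phi> (f i) x) (carrier G)" for c
    using assms unfolding pullback_def by (intro restrict_ext) (auto simp: Pi_iff)
  thus ?thesis unfolding pullback_Grass_def qspan_def by (auto simp: image_def)
qed

lemma pullback_inj_on_extensional:
  assumes "\<phi> ` carrier G = carrier Q"
  shows "inj_on (pullback G \<phi>) (extensional (carrier Q))"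
proof (rule inj_onI, rule extensionalityI)
  fix f g y
  assume "f \<in> extensional (carrier Q)" "g \<in> extensional (carrier Q)"
    and eq: "pullback G \<phi> f = pullback G \<phi> g" and "y \<in> carrier Q"
  then obtain x where "x \<in> carrier G" "y = \<phi> x" using assms by auto
  with fun_cong[OF eq, of x] show "f y = g y" unfolding pullback_def by simp
qed

lemma pullback_Grass_qspan_inj:
  assumes "\<phi> ` carrier G = carrier Q"
    and "pullback_Grass G \<phi> (qspan Q r f) = pullback_Grass G \<phi> (qspan Q s g)"
  shows "qspan Q r f = qspan Q s g"
  using assms(2) unfolding pullback_Grass_def
  by (simp add: inj_on_image_eq_iff[OF pullback_inj_on_extensional[OF assms(1)]]
      qspan_subset_extensional)

lemma pullback_in_H1:
  assumes "group G" "\<phi> \<in> hom G Q" "f \<in> H1 Q"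
  shows "pullback G \<phi> f \<in> H1 G"
  using assms monoid.m_closed[OF group.is_monoid[OF assms(1)]]
  unfolding H1_def pullback_def hom_def add_grp_def by (auto simp: Pi_iff)

lemma qlin_indep_pullback:
  assumes "\<phi> ` carrier G = carrier Q" "qlin_indep Q r f"
  shows "qlin_indep G r (\<lambda>i. pullback G \<phi> (f i))"
  unfolding qlin_indep_def
proof (rule allI, rule impI)
  fix c assume vanish: "\<forall>x\<in>carrier G. (\<Sum>i<r. c i * pullback G \<phi> (f i) x) = 0"
  have "(\<Sum>i<r. c i * f i y) = 0" if "y \<in> carrier Q" for y
  proof -
    obtain x where "x \<in> carrier G" "y = \<phi> x" using assms(1) \<open>y \<in> carrier Q\<close> by auto
    thus ?thesis using vanish unfolding pullback_def by simp
  qed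
  thus "\<forall>i<r. c i = 0" using assms(2) unfolding qlin_indep_def by blast
qed

lemma pullback_Grass_in_Grass:
  assumes "group G" "\<phi> \<in> hom G Q" "\<phi> ` carrier G = carrier Q" "P \<in> Grass r Q"
  shows "pullback_Grass G \<phi> P \<in> Grass r G"
proof -
  obtain f where f: "\<forall>i<r. f i \<in> H1 Q" "qlin_indep Q r f" "P = qspan Q r f"
    using assms(4) unfolding Grass_def by auto
  have "pullback_Grass G \<phi> P = qspan G r (\<lambda>i. pullback G \<phi> (f i))"
    using f(3) assms(2) pullback_Grass_qspan[of \<phi> G Q] unfolding hom_def by simp
  moreover have "\<forall>i<r. pullback G \<phi> (f i) \<in> H1 G"
    using f(1) pullback_in_H1[OF assms(1,2)] by blast
  ultimately show ?thesis
    using qlin_indep_pullback[OF assms(3) f(2)] unfolding Grass_def by auto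
qed

lemma inv_into_fibre_constant:
  assumes "\<And>x1 x2. x1 \<in> A \<Longrightarrow> x2 \<in> A \<Longrightarrow> \<phi> x1 = \<phi> x2 \<Longrightarrow> h x1 = h x2" "x \<in> A"
  shows "h (inv_into A \<phi> (\<phi> x)) = h x"
proof (rule assms(1))
  show "inv_into A \<phi> (\<phi> x) \<in> A" "\<phi> (inv_into A \<phi> (\<phi> x)) = \<phi> x"
    using assms(2) by (auto intro: inv_into_into f_inv_into_f)
qed fact

lemma hom_descends:
  assumes "\<phi> \<in> hom G Q" "\<phi> ` carrier G = carrier Q" "group G" "h \<in> hom G H"
    and "\<And>x1 x2. x1 \<in> carrier G \<Longrightarrow> x2 \<in> carrier G \<Longrightarrow> \<phi> x1 = \<phi> x2 \<Longrightarrow> h x1 = h x2"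
  shows "(\<lambda>y. h (inv_into (carrier G) \<phi> y)) \<in> hom Q H"
  unfolding hom_def
proof (intro CollectI conjI ballI)
  show "(\<lambda>y. h (inv_into (carrier G) \<phi> y)) \<in> carrier Q \<rightarrow> carrier H"
    using assms(2,4) inv_into_into[of _ \<phi> "carrier G"] unfolding hom_def by auto
  fix a b assume "a \<in> carrier Q" "b \<in> carrier Q"
  then obtain x y where xy: "x \<in> carrier G" "y \<in> carrier G" "a = \<phi> x" "b = \<phi> y"
    using assms(2) by blast
  have descends: "h (inv_into (carrier G) \<phi> (\<phi> z)) = h z" if "z \<in> carrier G" for z
    using inv_into_fibre_constant[of "carrier G" \<phi> h] assms(5) that by blast
  have "a \<otimes>\<^bsub>Q\<^esub> b = \<phi> (x \<otimes>\<^bsub>G\<^esub> y)" "x \<otimes>\<^bsub>G\<^esub> y \<in> carrier G"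
    using xy assms(1,3) by (auto simp: hom_mult group.is_monoid monoid.m_closed)
  with xy assms(4) descends show "h (inv_into (carrier G) \<phi> (a \<otimes>\<^bsub>Q\<^esub> b))
      = h (inv_into (carrier G) \<phi> a) \<otimes>\<^bsub>H\<^esub> h (inv_into (carrier G) \<phi> b)"
    by (simp add: hom_mult)
qed

context
  fixes G :: "('a, 'c) monoid_scheme" and Q :: "('b, 'd) monoid_scheme" and \<phi> :: "'a \<Rightarrow> 'b"
    and r :: nat and \<nu> :: "nat \<Rightarrow> 'a \<Rightarrow> int"
  assumes fibre_constant:
    "\<And>i x1 x2. i < r \<Longrightarrow> x1 \<in> carrier G \<Longrightarrow> x2 \<in> carrier G \<Longrightarrow> \<phi> x1 = \<phi> x2 \<Longrightarrow> \<nu> i x1 = \<nu> i x2"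
    and surj: "\<phi> ` carrier G = carrier Q"
begin

definition descended :: "nat \<Rightarrow> 'b \<Rightarrow> int" where
  "descended i y = \<nu> i (inv_into (carrier G) \<phi> y)"

lemma descended_comp: "i < r \<Longrightarrow> x \<in> carrier G \<Longrightarrow> descended i (\<phi> x) = \<nu> i x"
  unfolding descended_def by (rule inv_into_fibre_constant) (auto intro: fibre_constant)

lemma epi_Zr_descended:
  assumes "group G" "\<phi> \<in> hom G Q" "epi_Zr G r \<nu>"
  shows "epi_Zr Q r descended"
  unfolding epi_Zr_def
proof (intro conjI allI impI)
  fix i assume "i < r"
  then show "descended i \<in> hom Q add_grp"
    using assms fibre_constant surj hom_descends[of \<phi> G Q "\<nu> i"]
    unfolding epi_Zr_def descended_def[abs_def] by blast
next
  fix z :: "nat \<Rightarrow> int"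
  obtain g where "g \<in> carrier G" "\<forall>i<r. \<nu> i g = z i" using assms(3) unfolding epi_Zr_def by blast
  then show "\<exists>y\<in>carrier Q. \<forall>i<r. descended i y = z i"
    using surj descended_comp by (intro bexI[of _ "\<phi> g"]) auto
qed

lemma ker_Zr_descended: "ker_Zr Q r descended = \<phi> ` ker_Zr G r \<nu>"
proof
  show "ker_Zr Q r descended \<subseteq> \<phi> ` ker_Zr G r \<nu>"
  proof
    fix y assume y: "y \<in> ker_Zr Q r descended"
    then obtain x where "x \<in> carrier G" "y = \<phi> x" using surj unfolding ker_Zr_def by auto
    with y show "y \<in> \<phi> ` ker_Zr G r \<nu>" using descended_comp unfolding ker_Zr_def by auto
  qed
  show "\<phi> ` ker_Zr G r \<nu> \<subseteq> ker_Zr Q r descended"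
    using descended_comp surj unfolding ker_Zr_def by auto
qed

lemma pullback_Grass_P_nu_descended: "pullback_Grass G \<phi> (P_nu Q r descended) = P_nu G r \<nu>"
proof -
  have "\<phi> \<in> carrier G \<rightarrow> carrier Q" using surj by auto
  then have "pullback_Grass G \<phi> (P_nu Q r descended)
      = qspan G r (\<lambda>i. pullback G \<phi> (\<lambda>y. of_int (descended i y)))"
    unfolding P_nu_def by (rule pullback_Grass_qspan)
  also have "\<dots> = P_nu G r \<nu>"
    unfolding P_nu_def by (rule qspan_cong) (simp add: pullback_def descended_comp)
  finally show ?thesis .
qed

end

text \<open>The coordinates of \<open>\<nu>\<close> lie in \<open>P\<^sub>\<nu>\<close>, so if \<open>P\<^sub>\<nu>\<close> consists of pullbacks they factor through \<open>\<phi>\<close>.\<close>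

lemma P_nu_pullback_fibre_constant:
  assumes "P_nu G r \<nu> = pullback_Grass G \<phi> P"
    and "i < r" "x1 \<in> carrier G" "x2 \<in> carrier G" "\<phi> x1 = \<phi> x2"
  shows "\<nu> i x1 = \<nu> i x2"
proof -
  have "restrict (\<lambda>x. of_int (\<nu> i x)) (carrier G) \<in> P_nu G r \<nu>"
    unfolding P_nu_def
    using coordinate_in_qspan[OF assms(2), where G = G and f = "\<lambda>i x. of_int (\<nu> i x)"] by simp
  then obtain p where p: "restrict (\<lambda>x. of_int (\<nu> i x) :: rat) (carrier G) = pullback G \<phi> p"
    using assms(1) unfolding pullback_Grass_def by auto
  have "of_int (\<nu> i x) = p (\<phi> x)" if "x \<in> carrier G" for x
    using fun_cong[OF p, of x] that unfolding pullback_def by simp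
  then have "(of_int (\<nu> i x1) :: rat) = of_int (\<nu> i x2)" using assms(3-5) by simp
  thus ?thesis by simp
qed

lemma (in group_hom) b1_finite_image:
  assumes "K \<subseteq> carrier G" "b1_finite G K"
  shows "b1_finite H (h ` K)"
proof -
  obtain S where S: "finite S" "S \<subseteq> K"
    "\<forall>k\<in>K. \<exists>m::nat. m > 0 \<and> k [^]\<^bsub>G\<^esub> m \<in> generate G (S \<union> derived G K)"
    using assms(2) unfolding b1_finite_def by blast
  have gen: "h ` generate G (S \<union> derived G K) = generate H (h ` S \<union> derived H (h ` K))"
    using generate_img[of "S \<union> derived G K"] derived_img[OF assms(1)]
      G.derived_in_carrier[OF assms(1)] S(2) assms(1) by (simp add: image_Un)
  have "\<exists>m::nat. m > 0 \<and> h k [^]\<^bsub>H\<^esub> m \<in> generate H (h ` S \<union> derived H (h ` K))" if "k \<in> K" for k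
  proof -
    obtain m :: nat where "m > 0" "k [^]\<^bsub>G\<^esub> m \<in> generate G (S \<union> derived G K)"
      using S(3) \<open>k \<in> K\<close> by blast
    moreover have "h (k [^]\<^bsub>G\<^esub> m) = h k [^]\<^bsub>H\<^esub> m" using hom_nat_pow that assms(1) by auto
    ultimately show ?thesis using gen by (metis imageI)
  qed
  thus ?thesis unfolding b1_finite_def using S(1,2) by (intro exI[of _ "h ` S"]) auto
qed

lemma Omega1_of_pullback_Grass:
  assumes "group G" "group Q" "\<phi> \<in> hom G Q" "\<phi> ` carrier G = carrier Q"
    and "P \<in> Grass r Q" "pullback_Grass G \<phi> P \<in> Omega1 r G"
  shows "P \<in> Omega1 r Q"
proof -
  obtain \<nu> where \<nu>: "epi_Zr G r \<nu>" "pullback_Grass G \<phi> P = P_nu G r \<nu>"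
      "b1_finite G (ker_Zr G r \<nu>)"
    using assms(6) unfolding Omega1_def by auto
  have fibre: "\<And>i x1 x2. i < r \<Longrightarrow> x1 \<in> carrier G \<Longrightarrow> x2 \<in> carrier G \<Longrightarrow> \<phi> x1 = \<phi> x2
      \<Longrightarrow> \<nu> i x1 = \<nu> i x2"
    using P_nu_pullback_fibre_constant \<nu>(2) by metis
  let ?\<nu>' = "descended G \<phi> \<nu>"
  obtain f where "P = qspan Q r f" using assms(5) unfolding Grass_def by auto
  moreover have "pullback_Grass G \<phi> P = pullback_Grass G \<phi> (P_nu Q r ?\<nu>')"
    using \<nu>(2) pullback_Grass_P_nu_descended[OF fibre assms(4)] by simp
  ultimately have P_eq: "P = P_nu Q r ?\<nu>'"
    using pullback_Grass_qspan_inj[OF assms(4)] unfolding P_nu_def by blast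
  have epi: "epi_Zr Q r ?\<nu>'"
    using epi_Zr_descended[OF fibre assms(4) assms(1,3) \<nu>(1)] .
  have "group_hom G Q \<phi>"
    using assms(1-3) unfolding group_hom_def group_hom_axioms_def by blast
  moreover have "ker_Zr G r \<nu> \<subseteq> carrier G" unfolding ker_Zr_def by blast
  ultimately have "b1_finite Q (\<phi> ` ker_Zr G r \<nu>)"
    using group_hom.b1_finite_image \<nu>(3) by blast
  then have "b1_finite Q (ker_Zr Q r ?\<nu>')"
    by (simp add: ker_Zr_descended[OF fibre assms(4)])
  with assms(5) P_eq epi show ?thesis unfolding Omega1_def by blast
qed

theorem proposition4p13:
  fixes G :: "('a, 'c) monoid_scheme" and Q :: "('b, 'd) monoid_scheme" and \<phi> :: "'a \<Rightarrow> 'b"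
  assumes "fin_gen_group G" and "group Q"
    and "\<phi> \<in> hom G Q" and "\<phi> ` carrier G = carrier Q"
    and "r \<ge> 1"
    and "P \<in> Grass r Q - Omega1 r Q"
  shows "pullback_Grass G \<phi> P \<in> Grass r G - Omega1 r G"
proof -
  have "group G" using assms(1) unfolding fin_gen_group_def by simp
  then show ?thesis
    using assms(2-4,6) pullback_Grass_in_Grass[of G \<phi> Q P r]
      Omega1_of_pullback_Grass[of G Q \<phi> P r] by blast
qed

end
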